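(* Let $0\le r\le n$ be integers and let $\alpha,\beta$ be indeterminates. Then \[\sum_{A\in\mathcal{A}_{n+1,r+1}} \alpha^{-|\mathrm{lrs}(A)|}\,\beta^{-|\mathrm{rls}(A)|} \;=\; \binom{n}{r}\prod_{i=r}^{n-1}\left(\alpha^{-1}+\beta^{-1}+i\right).\]
   Context: An assemblée of size $(m,s)$ is a collection of $s$ nonempty, pairwise disjoint, linearly ordered sets (blocks) whose union is $\{1,\dots,m\}$; the last element of a block is its block-end. The blocks are always listed in the canonical order in which the block-ends decrease from left to right, and the assemblée is identified with the word of length $m$ obtained by concatenating its blocks in this order ("left/right in $A$" refers to this word). $\mathcal{A}_{m,s}$ denotes the set of assemblées of size $(m,s)$. For $A\in\mathcal{A}_{n+1,r+1}$ let $b_1>b_2>\dots>b_{r+1}$ be its block-ends. Then $\mathrm{lrs}(A)$ is the set of elements $x$ of $A$ with $x>b_1$ such that $x$ is larger than every element $y>b_1$ appearing to the right of $x$ in $A$; and $\mathrm{rls}(A)$ is the set of elements $x$ of $A$ with $x<b_{r+1}$ such that $x$ is larger than every element $y<b_{r+1}$ appearing to the left of $x$ in $A$. (Example: for $A=[2,10,12,7]\,[5,9,1,8,6]\,[3,11,4]$, $\mathrm{lrs}(A)=\{12,11\}$ and $\mathrm{rls}(A)=\{3,2\}$.) *)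

theory Defs
  imports Main
begin

text \<open>An assemblee of size (m,s) is represented by the list of its blocks in canonical
order (block-ends strictly decreasing from left to right); each block is a nonempty
list (a linearly ordered set), the blocks are pairwise disjoint (the concatenation is
distinct) and their union is {1..m}. This list representation is in bijection with the
collections of blocks.\<close>

definition assemblees :: "nat \<Rightarrow> nat \<Rightarrow> nat list list set" where
  "assemblees m s = {bs. length bs = s \<and> (\<forall>b\<in>set bs. b \<noteq> []) \<and>
      distinct (concat bs) \<and> set (concat bs) = {1..m} \<and>
      sorted_wrt (>) (map last bs)}"

definition aword :: "nat list list \<Rightarrow> nat list" where
  "aword bs = concat bs"

definition lrs :: "nat list list \<Rightarrow> nat set" where
  "lrs bs = (let w = aword bs; b1 = last (hd bs) in
     {w ! i | i. i < length w \<and> w ! i > b1 \<and>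
        (\<forall>j. i < j \<and> j < length w \<and> w ! j > b1 \<longrightarrow> w ! j < w ! i)})"

definition rls :: "nat list list \<Rightarrow> nat set" where
  "rls bs = (let w = aword bs; bl = last (last bs) in
     {w ! i | i. i < length w \<and> w ! i < bl \<and>
        (\<forall>j. j < i \<and> w ! j < bl \<longrightarrow> w ! j < w ! i)})"

end

theory Submission
  imports Defs
begin

text \<open>Fix thresholds \<open>H \<ge> E \<ge> L \<ge> t\<close> and weigh a word by \<open>x\<close> per right-to-left maximum among
  its letters above \<open>H\<close> and by \<open>y\<close> per left-to-right maximum among its letters below \<open>L\<close> that
  are at least \<open>t\<close>. Summed over the assemblees on a finite set \<open>S\<close> with \<open>r + 1\<close> blocks, least
  block-end \<open>L\<close> and greatest block-end at most \<open>E\<close>, this weight depends only on \<open>|S|\<close> and on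
  the numbers \<open>p, q, m\<close> of letters above \<open>H\<close>, in \<open>[t, L)\<close> and in \<open>(L, E]\<close>: it is
  \<open>C(m, r) (|S| - 1)! / (r! p! q!) \<cdot> pochhammer x p \<cdot> pochhammer y q\<close>. This is proved by
  induction on \<open>|S|\<close>, deleting the first letter of the word: it either shortens the first block
  or is a singleton first block, and in both cases the remaining word is again such an
  assemblee. Taking \<open>E = H = b\<^sub>1\<close> and subtracting the case \<open>E = b\<^sub>1 - 1\<close> isolates the assemblees
  with prescribed extreme block-ends, and the sum over all of them collapses by two
  Vandermonde convolutions for rising factorials.\<close>

definition records_above :: "nat \<Rightarrow> nat list \<Rightarrow> nat set" where
  "records_above H w = {w ! i | i. i < length w \<and> H < w ! i \<and>
     (\<forall>j. i < j \<and> j < length w \<and> H < w ! j \<longrightarrow> w ! j < w ! i)}"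

text \<open>The lower cut-off \<open>t\<close> makes the statistic compositional: a letter of \<open>w\<close> is a
  left-to-right maximum below \<open>L\<close> of \<open>u @ w\<close> iff it is one of \<open>w\<close> that is at least
  \<open>t\<close> = one more than the largest letter of \<open>u\<close> below \<open>L\<close>.\<close>

definition records_below :: "nat \<Rightarrow> nat \<Rightarrow> nat list \<Rightarrow> nat set" where
  "records_below L t w = {w ! i | i. i < length w \<and> t \<le> w ! i \<and> w ! i < L \<and>
     (\<forall>j. j < i \<and> w ! j < L \<longrightarrow> w ! j < w ! i)}"

lemma lrs_eq_records_above: "lrs A = records_above (last (hd A)) (concat A)"
  unfolding lrs_def records_above_def aword_def Let_def by simp

lemma rls_eq_records_below: "rls A = records_below (last (last A)) 0 (concat A)"
  unfolding rls_def records_below_def aword_def Let_def by simp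

lemma records_above_subset: "records_above H w \<subseteq> set w"
  unfolding records_above_def by auto

lemma records_below_subset: "records_below L t w \<subseteq> set w"
  unfolding records_below_def by auto

lemma Collect_nth_Cons:
  "{(a # w) ! i | i. i < length (a # w) \<and> P i}
     = (if P 0 then {a} else {}) \<union> {w ! i | i. i < length w \<and> P (Suc i)}"
proof (rule set_eqI, rule iffI)
  fix x assume "x \<in> {(a # w) ! i | i. i < length (a # w) \<and> P i}"
  then obtain i where "x = (a # w) ! i" "i < length (a # w)" "P i" by blast
  then show "x \<in> (if P 0 then {a} else {}) \<union> {w ! i | i. i < length w \<and> P (Suc i)}"
    by (cases i) auto
next
  fix x assume "x \<in> (if P 0 then {a} else {}) \<union> {w ! i | i. i < length w \<and> P (Suc i)}"
  then consider "x = a" "P 0" | i where "x = w ! i" "i < length w" "P (Suc i)"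
    by (auto split: if_splits)
  then show "x \<in> {(a # w) ! i | i. i < length (a # w) \<and> P i}"
  proof cases
    case 1 then show ?thesis by force
  next
    case 2 then show ?thesis by (intro CollectI exI[of _ "Suc i"]) simp
  qed
qed

lemma ball_set_Cons_nth: "(\<forall>j. 0 < j \<and> j < length (a # w) \<longrightarrow> Q ((a # w) ! j)) \<longleftrightarrow> (\<forall>b\<in>set w. Q b)"
  by (auto simp: all_set_conv_all_nth)

lemma all_greater_Suc_iff: "(\<forall>j. Suc i < j \<longrightarrow> P j) \<longleftrightarrow> (\<forall>k. i < k \<longrightarrow> P (Suc k))"
proof
  assume "\<forall>k. i < k \<longrightarrow> P (Suc k)"
  then show "\<forall>j. Suc i < j \<longrightarrow> P j"
    by (metis Suc_less_eq Suc_lessE)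
qed simp

lemma records_above_Cons:
  "records_above H (a # w) =
     (if H < a \<and> (\<forall>b\<in>set w. H < b \<longrightarrow> b < a) then insert a (records_above H w) else records_above H w)"
proof -
  have "(\<forall>j. 0 < j \<and> j < length (a # w) \<and> H < (a # w) ! j \<longrightarrow> (a # w) ! j < a)
      \<longleftrightarrow> (\<forall>b\<in>set w. H < b \<longrightarrow> b < a)"
    using ball_set_Cons_nth[of a w "\<lambda>b. H < b \<longrightarrow> b < a"] by auto
  moreover have "(\<forall>j. Suc i < j \<and> j < length (a # w) \<and> H < (a # w) ! j \<longrightarrow> (a # w) ! j < w ! i)
      \<longleftrightarrow> (\<forall>j. i < j \<and> j < length w \<and> H < w ! j \<longrightarrow> w ! j < w ! i)" for i
    unfolding imp_conjL all_greater_Suc_iff by simp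
  ultimately show ?thesis
    unfolding records_above_def Collect_nth_Cons by auto
qed

lemma records_below_Cons:
  "records_below L t (a # w) =
     (if a < L \<and> t \<le> a then insert a (records_below L (max t (Suc a)) w)
      else records_below L (if a < L then max t (Suc a) else t) w)"
proof -
  define t' where "t' = (if a < L then max t (Suc a) else t)"
  have "t \<le> w ! i \<and> w ! i < L \<and> (\<forall>j. j < Suc i \<and> (a # w) ! j < L \<longrightarrow> (a # w) ! j < w ! i)
      \<longleftrightarrow> t' \<le> w ! i \<and> w ! i < L \<and> (\<forall>j. j < i \<and> w ! j < L \<longrightarrow> w ! j < w ! i)" for i
    unfolding imp_conjL All_less_Suc2 t'_def by auto
  then have "records_below L t (a # w) = (if t \<le> a \<and> a < L then {a} else {}) \<union> records_below L t' w"
    unfolding records_below_def Collect_nth_Cons by simp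
  then show ?thesis
    unfolding t'_def by auto
qed

definition record_weight :: "'a::comm_ring_1 \<Rightarrow> 'a \<Rightarrow> nat \<Rightarrow> nat \<Rightarrow> nat \<Rightarrow> nat list \<Rightarrow> 'a" where
  "record_weight x y H L t w = x ^ card (records_above H w) * y ^ card (records_below L t w)"

lemma record_weight_Cons:
  assumes "a \<notin> set w"
  shows "record_weight x y H L t (a # w) =
     (if H < a \<and> (\<forall>b\<in>set w. H < b \<longrightarrow> b < a) then x else 1) * (if a < L \<and> t \<le> a then y else 1) *
     record_weight x y H L (if a < L then max t (Suc a) else t) w"
proof -
  have "finite (records_above H w)" "a \<notin> records_above H w"
    using finite_subset[OF records_above_subset] records_above_subset[of H w] assms by auto
  then have "x ^ card (records_above H (a # w)) =
      (if H < a \<and> (\<forall>b\<in>set w. H < b \<longrightarrow> b < a) then x else 1) * x ^ card (records_above H w)"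
    unfolding records_above_Cons by auto
  moreover have "finite (records_below L t' w)" "a \<notin> records_below L t' w" for t'
    using finite_subset[OF records_below_subset] records_below_subset[of L t' w] assms by auto
  then have "y ^ card (records_below L t (a # w)) =
      (if a < L \<and> t \<le> a then y else 1) * y ^ card (records_below L (if a < L then max t (Suc a) else t) w)"
    unfolding records_below_Cons by auto
  ultimately show ?thesis
    unfolding record_weight_def by (simp add: mult_ac)
qed

lemma record_weight_Cons_neutral:
  "a \<le> H \<Longrightarrow> L < a \<Longrightarrow> record_weight x y H L t (a # w) = record_weight x y H L t w"
  unfolding record_weight_def records_above_Cons records_below_Cons by simp

definition assemblees_on :: "nat set \<Rightarrow> nat \<Rightarrow> nat list list set" where
  "assemblees_on S s = {bs. length bs = s \<and> (\<forall>b\<in>set bs. b \<noteq> []) \<and>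
      distinct (concat bs) \<and> set (concat bs) = S \<and> sorted_wrt (>) (map last bs)}"

lemma assemblees_eq_assemblees_on: "assemblees m s = assemblees_on {1..m} s"
  unfolding assemblees_def assemblees_on_def ..

lemma finite_assemblees_on:
  assumes "finite S"
  shows "finite (assemblees_on S s)"
proof -
  let ?blocks = "{xs. set xs \<subseteq> S \<and> length xs \<le> card S}"
  have "assemblees_on S s \<subseteq> {bs. set bs \<subseteq> ?blocks \<and> length bs \<le> s}"
  proof
    fix bs assume "bs \<in> assemblees_on S s"
    then have bs: "length bs = s" "distinct (concat bs)" "set (concat bs) = S"
      unfolding assemblees_on_def by auto
    have "set b \<subseteq> S \<and> length b \<le> card S" if "b \<in> set bs" for b
      using that bs assms distinct_card[of b] card_mono[of S "set b"]
      by (auto simp: distinct_concat_iff)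
    with bs(1) show "bs \<in> {bs. set bs \<subseteq> ?blocks \<and> length bs \<le> s}" by auto
  qed
  moreover have "finite ?blocks" using finite_lists_length_le[OF assms] by simp
  ultimately show ?thesis
    using finite_lists_length_le finite_subset by blast
qed

lemma sorted_block_ends_le_hd:
  fixes bs :: "'a::linorder list list"
  assumes "sorted_wrt (>) (map last bs)" "b \<in> set bs"
  shows "last b \<le> last (hd bs)"
  using assms by (cases bs) (auto intro: less_imp_le)

lemma assemblees_on_block_ends:
  assumes "A \<in> assemblees_on S (Suc r)"
  shows "last (hd A) \<in> S" "last (last A) \<in> S" "last (last A) \<le> last (hd A)"
proof -
  have A: "A \<noteq> []" "\<forall>b\<in>set A. b \<noteq> []" "set (concat A) = S" "sorted_wrt (>) (map last A)"
    using assms unfolding assemblees_on_def by auto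
  then have "hd A \<in> set A" "last A \<in> set A" "hd A \<noteq> []" "last A \<noteq> []" by auto
  then show "last (hd A) \<in> S" "last (last A) \<in> S"
    using A(3) by (auto dest!: last_in_set)
  show "last (last A) \<le> last (hd A)"
    using sorted_block_ends_le_hd[OF A(4) \<open>last A \<in> set A\<close>] .
qed

definition assemblees_with_ends :: "nat set \<Rightarrow> nat \<Rightarrow> nat \<Rightarrow> nat \<Rightarrow> nat list list set" where
  "assemblees_with_ends S r E L = {bs \<in> assemblees_on S (Suc r). last (last bs) = L \<and> last (hd bs) \<le> E}"

lemma finite_assemblees_with_ends: "finite S \<Longrightarrow> finite (assemblees_with_ends S r E L)"
  unfolding assemblees_with_ends_def using finite_assemblees_on by auto

lemma bij_cons_first_block:
  assumes "L \<in> S"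
  shows "bij_betw (\<lambda>(a, bs). (a # hd bs) # tl bs)
           (SIGMA a:S - {L}. assemblees_with_ends (S - {a}) r E L)
           {bs \<in> assemblees_with_ends S r E L. tl (hd bs) \<noteq> []}"
proof (rule bij_betwI')
  fix p q assume "p \<in> (SIGMA a:S - {L}. assemblees_with_ends (S - {a}) r E L)"
    and "q \<in> (SIGMA a:S - {L}. assemblees_with_ends (S - {a}) r E L)"
  then show "((\<lambda>(a, bs). (a # hd bs) # tl bs) p = (\<lambda>(a, bs). (a # hd bs) # tl bs) q) = (p = q)"
    unfolding assemblees_with_ends_def assemblees_on_def
    by (cases p; cases q; case_tac "snd p"; case_tac "snd q") auto
next
  fix p assume p: "p \<in> (SIGMA a:S - {L}. assemblees_with_ends (S - {a}) r E L)"
  obtain a b rest where "p = (a, b # rest)" "a \<in> S" "a \<noteq> L"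
    and bs: "b # rest \<in> assemblees_with_ends (S - {a}) r E L"
    using p unfolding assemblees_with_ends_def assemblees_on_def by (cases p; case_tac "snd p") auto
  moreover have "b \<noteq> []" using bs unfolding assemblees_with_ends_def assemblees_on_def by auto
  ultimately show "(\<lambda>(a, bs). (a # hd bs) # tl bs) p \<in> {bs \<in> assemblees_with_ends S r E L. tl (hd bs) \<noteq> []}"
    unfolding assemblees_with_ends_def assemblees_on_def by (auto split: if_splits)
next
  fix bs assume "bs \<in> {bs \<in> assemblees_with_ends S r E L. tl (hd bs) \<noteq> []}"
  then obtain a b rest where bs: "bs = (a # b) # rest" "b \<noteq> []"
    and A: "(a # b) # rest \<in> assemblees_with_ends S r E L"
    unfolding assemblees_with_ends_def assemblees_on_def
    by (cases bs; case_tac "hd bs") auto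
  have "L \<in> set (concat (b # rest))"
  proof (cases "rest = []")
    case True
    then show ?thesis using A bs(2) last_in_set[of b] unfolding assemblees_with_ends_def by simp
  next
    case False
    then have "last rest \<in> set rest" "last rest \<noteq> []" "L = last (last rest)"
      using A unfolding assemblees_with_ends_def assemblees_on_def by auto
    then show ?thesis by force
  qed
  then have "a \<in> S - {L}" "b # rest \<in> assemblees_with_ends (S - {a}) r E L"
    using A bs(2) unfolding assemblees_with_ends_def assemblees_on_def by (auto split: if_splits)
  then show "\<exists>p\<in>(SIGMA a:S - {L}. assemblees_with_ends (S - {a}) r E L). bs = (\<lambda>(a, bs). (a # hd bs) # tl bs) p"
    using bs by (intro bexI[of _ "(a, b # rest)"]) auto
qed

lemma bij_singleton_first_block:
  "bij_betw (\<lambda>(a, bs). [a] # bs)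
     (SIGMA a:{a \<in> S. L < a \<and> a \<le> E}. assemblees_with_ends (S - {a}) r (a - 1) L)
     {bs \<in> assemblees_with_ends S (Suc r) E L. tl (hd bs) = []}"
proof (rule bij_betwI')
  fix p q show "((\<lambda>(a, bs). [a] # bs) p = (\<lambda>(a, bs). [a] # bs) q) = (p = q)"
    by (cases p; cases q) auto
next
  fix p assume p: "p \<in> (SIGMA a:{a \<in> S. L < a \<and> a \<le> E}. assemblees_with_ends (S - {a}) r (a - 1) L)"
  obtain a bs where "p = (a, bs)" "a \<in> S" "L < a" "a \<le> E"
    and bs: "bs \<in> assemblees_with_ends (S - {a}) r (a - 1) L"
    using p by (cases p) auto
  moreover have "bs \<noteq> []" using bs unfolding assemblees_with_ends_def assemblees_on_def by auto
  moreover have "last b < a" if "b \<in> set bs" for b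
    using sorted_block_ends_le_hd[of bs b] bs that \<open>L < a\<close>
    unfolding assemblees_with_ends_def assemblees_on_def by auto
  ultimately show "(\<lambda>(a, bs). [a] # bs) p \<in> {bs \<in> assemblees_with_ends S (Suc r) E L. tl (hd bs) = []}"
    unfolding assemblees_with_ends_def assemblees_on_def by auto
next
  fix bs assume "bs \<in> {bs \<in> assemblees_with_ends S (Suc r) E L. tl (hd bs) = []}"
  then obtain a rest where bs: "bs = [a] # rest"
    and A: "[a] # rest \<in> assemblees_with_ends S (Suc r) E L"
    unfolding assemblees_with_ends_def assemblees_on_def
    by (cases bs; case_tac "hd bs") auto
  then have "rest \<noteq> []" "\<forall>b\<in>set rest. last b < a"
    unfolding assemblees_with_ends_def assemblees_on_def by auto
  moreover have "last (last rest) = L"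
    using A \<open>rest \<noteq> []\<close> unfolding assemblees_with_ends_def by simp
  ultimately have "L < a" "last (hd rest) \<le> a - 1"
    using last_in_set[of rest] hd_in_set[of rest] by fastforce+
  then have "a \<in> {a \<in> S. L < a \<and> a \<le> E}" "rest \<in> assemblees_with_ends (S - {a}) r (a - 1) L"
    using A \<open>rest \<noteq> []\<close> unfolding assemblees_with_ends_def assemblees_on_def by auto
  then show "\<exists>p\<in>(SIGMA a:{a \<in> S. L < a \<and> a \<le> E}. assemblees_with_ends (S - {a}) r (a - 1) L).
      bs = (\<lambda>(a, bs). [a] # bs) p"
    using bs by (intro bexI[of _ "(a, rest)"]) auto
qed

lemma single_block_not_singleton:
  assumes "2 \<le> card S"
  shows "{bs \<in> assemblees_with_ends S 0 E L. tl (hd bs) = []} = {}"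
proof -
  have "S = {a}" if "[[a]] \<in> assemblees_on S (Suc 0)" for a
    using that unfolding assemblees_on_def by auto
  with assms show ?thesis
    unfolding assemblees_with_ends_def assemblees_on_def
    by (auto simp: length_Suc_conv tl_Nil)
qed

text \<open>The threshold \<open>H\<close> plays the role of the largest block-end \<open>b\<^sub>1\<close>; it is kept apart from the
  bound \<open>E\<close>, which drops when a singleton first block is deleted.\<close>

definition weight_sum :: "'a::comm_ring_1 \<Rightarrow> 'a \<Rightarrow> nat set \<Rightarrow> nat \<Rightarrow> nat \<Rightarrow> nat \<Rightarrow> nat \<Rightarrow> nat \<Rightarrow> 'a" where
  "weight_sum x y S r E H L t = (\<Sum>bs\<in>assemblees_with_ends S r E L. record_weight x y H L t (concat bs))"

lemma weight_sum_long_first_block: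
  fixes x y :: "'a::comm_ring_1"
  assumes "finite S" "L \<in> S"
  shows "(\<Sum>bs\<in>{bs \<in> assemblees_with_ends S r E L. tl (hd bs) \<noteq> []}. record_weight x y H L t (concat bs)) =
    (\<Sum>a\<in>S - {L}. (if H < a \<and> (\<forall>b\<in>S - {a}. H < b \<longrightarrow> b < a) then x else 1) * (if a < L \<and> t \<le> a then y else 1)
        * weight_sum x y (S - {a}) r E H L (if a < L then max t (Suc a) else t))"
    (is "_ = (\<Sum>a\<in>_. ?c a * weight_sum x y (S - {a}) r E H L (?t a))")
proof -
  have first_letter: "record_weight x y H L t (concat ((a # hd bs) # tl bs)) =
      ?c a * record_weight x y H L (?t a) (concat bs)"
    if "bs \<in> assemblees_with_ends (S - {a}) r E L" for a bs
  proof -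
    have "bs \<noteq> []" and S_a: "set (concat bs) = S - {a}"
      using that unfolding assemblees_with_ends_def assemblees_on_def by auto
    then have "concat ((a # hd bs) # tl bs) = a # concat bs"
      by (cases bs) simp_all
    moreover have "a \<notin> set (concat bs)"
      using S_a by simp
    ultimately show ?thesis
      using record_weight_Cons[of a "concat bs" x y H L t] unfolding S_a by simp
  qed
  have "(\<Sum>bs\<in>{bs \<in> assemblees_with_ends S r E L. tl (hd bs) \<noteq> []}. record_weight x y H L t (concat bs))
      = (\<Sum>(a, bs)\<in>(SIGMA a:S - {L}. assemblees_with_ends (S - {a}) r E L).
           record_weight x y H L t (concat ((a # hd bs) # tl bs)))"
    using sum.reindex_bij_betw[OF bij_cons_first_block[OF assms(2)],
        where g = "\<lambda>bs. record_weight x y H L t (concat bs)"] by (simp add: split_beta)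
  also have "\<dots> = (\<Sum>a\<in>S - {L}. \<Sum>bs\<in>assemblees_with_ends (S - {a}) r E L.
      record_weight x y H L t (concat ((a # hd bs) # tl bs)))"
    using assms(1) finite_assemblees_with_ends by (subst sum.Sigma) auto
  also have "\<dots> = (\<Sum>a\<in>S - {L}. ?c a * weight_sum x y (S - {a}) r E H L (?t a))"
    unfolding weight_sum_def sum_distrib_left by (intro sum.cong refl) (simp only: first_letter)
  finally show ?thesis .
qed

lemma weight_sum_singleton_first_block:
  fixes x y :: "'a::comm_ring_1"
  assumes "finite S" "E \<le> H"
  shows "(\<Sum>bs\<in>{bs \<in> assemblees_with_ends S (Suc r) E L. tl (hd bs) = []}. record_weight x y H L t (concat bs)) =
    (\<Sum>a\<in>{a \<in> S. L < a \<and> a \<le> E}. weight_sum x y (S - {a}) r (a - 1) H L t)"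
proof -
  have "(\<Sum>bs\<in>{bs \<in> assemblees_with_ends S (Suc r) E L. tl (hd bs) = []}. record_weight x y H L t (concat bs))
      = (\<Sum>(a, bs)\<in>(SIGMA a:{a \<in> S. L < a \<and> a \<le> E}. assemblees_with_ends (S - {a}) r (a - 1) L).
           record_weight x y H L t (a # concat bs))"
    using sum.reindex_bij_betw[OF bij_singleton_first_block,
        where g = "\<lambda>bs. record_weight x y H L t (concat bs)"] by (simp add: split_beta)
  also have "\<dots> = (\<Sum>a\<in>{a \<in> S. L < a \<and> a \<le> E}. \<Sum>bs\<in>assemblees_with_ends (S - {a}) r (a - 1) L.
      record_weight x y H L t (a # concat bs))"
    using assms(1) finite_assemblees_with_ends by (subst sum.Sigma) auto
  also have "\<dots> = (\<Sum>a\<in>{a \<in> S. L < a \<and> a \<le> E}. weight_sum x y (S - {a}) r (a - 1) H L t)"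
    unfolding weight_sum_def using assms(2)
    by (intro sum.cong refl) (simp add: record_weight_Cons_neutral)
  finally show ?thesis .
qed

lemma weight_sum_first_letter:
  fixes x y :: "'a::comm_ring_1"
  assumes "finite S" "2 \<le> card S" "L \<in> S" "E \<le> H"
  shows "weight_sum x y S r E H L t =
    (\<Sum>a\<in>S - {L}. (if H < a \<and> (\<forall>b\<in>S - {a}. H < b \<longrightarrow> b < a) then x else 1) * (if a < L \<and> t \<le> a then y else 1)
        * weight_sum x y (S - {a}) r E H L (if a < L then max t (Suc a) else t))
    + (if r = 0 then 0 else (\<Sum>a\<in>{a \<in> S. L < a \<and> a \<le> E}. weight_sum x y (S - {a}) (r - 1) (a - 1) H L t))"
proof -
  let ?F = "assemblees_with_ends S r E L"
  have split: "weight_sum x y S r E H L t =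
      (\<Sum>bs\<in>{bs \<in> ?F. tl (hd bs) \<noteq> []}. record_weight x y H L t (concat bs)) +
      (\<Sum>bs\<in>{bs \<in> ?F. tl (hd bs) = []}. record_weight x y H L t (concat bs))"
    unfolding weight_sum_def using finite_assemblees_with_ends[OF assms(1)]
    by (subst sum.union_disjoint[symmetric]) (auto intro: sum.cong)
  show ?thesis
  proof (cases r)
    case 0
    show ?thesis
      unfolding split weight_sum_long_first_block[OF assms(1,3)]
      unfolding 0 single_block_not_singleton[OF assms(2)]
      by simp
  next
    case (Suc r')
    show ?thesis
      unfolding split weight_sum_long_first_block[OF assms(1,3)]
      unfolding Suc weight_sum_singleton_first_block[OF assms(1,4)]
      by simp
  qed
qed

text \<open>The quotient below is exact when \<open>m + p + q \<le> n\<close> and \<open>r \<le> m\<close>; if \<open>r > m\<close> the binomial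
  factor vanishes, so \<open>kcoeff_mult_facts\<close> holds whenever \<open>m + p + q \<le> n\<close>.\<close>

definition kcoeff :: "nat \<Rightarrow> nat \<Rightarrow> nat \<Rightarrow> nat \<Rightarrow> nat \<Rightarrow> nat" where
  "kcoeff n p q m r = (m choose r) * (fact n div (fact r * fact p * fact q))"

lemma fact3_dvd_fact:
  assumes "r + p + q \<le> n"
  shows "fact r * fact p * fact q dvd (fact n :: nat)"
proof -
  have "fact r * fact p * fact q dvd fact (r + p) * (fact q :: nat)"
    using fact_fact_dvd_fact[of r p] by (rule mult_dvd_mono) simp
  also have "\<dots> dvd fact (r + p + q)"
    by (rule fact_fact_dvd_fact)
  also have "\<dots> dvd fact n"
    using assms by (rule fact_dvd)
  finally show ?thesis .
qed

lemma kcoeff_mult_facts: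
  assumes "m + p + q \<le> n"
  shows "kcoeff n p q m r * (fact r * fact p * fact q) = (m choose r) * fact n"
proof (cases "r \<le> m")
  case True
  then have "fact r * fact p * fact q dvd (fact n :: nat)"
    using assms by (intro fact3_dvd_fact) simp
  then show ?thesis unfolding kcoeff_def by (simp add: mult.assoc)
qed (simp add: kcoeff_def)

lemma kcoeff_eqI:
  assumes "m + p + q \<le> n" "k * (fact r * fact p * fact q) = (m choose r) * fact n"
  shows "kcoeff n p q m r = k"
proof -
  have "kcoeff n p q m r * (fact r * fact p * fact q) = k * (fact r * fact p * fact q)"
    using kcoeff_mult_facts[OF assms(1), of r] assms(2) by simp
  moreover have "fact r * fact p * fact q \<noteq> (0 :: nat)"
    by simp
  ultimately show ?thesis
    using mult_right_cancel by blast
qed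

lemma kcoeff_Suc_shift:
  assumes "m + p + Suc i \<le> n"
  shows "kcoeff n p i m r = Suc i * kcoeff n p (Suc i) m r"
proof (rule kcoeff_eqI)
  show "Suc i * kcoeff n p (Suc i) m r * (fact r * fact p * fact i) = (m choose r) * fact n"
    using kcoeff_mult_facts[OF assms, of r] by (simp only: fact_Suc of_nat_id mult_ac)
qed (use assms in simp)

lemma sum_kcoeff_choose:
  assumes "m + p + q \<le> Suc n"
  shows "(\<Sum>j<m. kcoeff n p q j r) * (fact (Suc r) * fact p * fact q) = Suc r * (m choose Suc r) * fact n"
proof -
  have "(\<Sum>j<m. kcoeff n p q j r) * (fact (Suc r) * fact p * fact q)
      = (\<Sum>j<m. Suc r * (kcoeff n p q j r * (fact r * fact p * fact q)))"
    unfolding sum_distrib_right by (intro sum.cong refl) (simp only: fact_Suc of_nat_id mult_ac)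
  also have "\<dots> = (\<Sum>j<m. Suc r * (j choose r) * fact n)"
  proof (intro sum.cong refl)
    fix j assume "j \<in> {..<m}"
    then have "kcoeff n p q j r * (fact r * fact p * fact q) = (j choose r) * fact n"
      using assms by (intro kcoeff_mult_facts) simp
    then show "Suc r * (kcoeff n p q j r * (fact r * fact p * fact q)) = Suc r * (j choose r) * fact n"
      by (simp only: mult.assoc)
  qed
  also have "\<dots> = Suc r * (\<Sum>j<m. j choose r) * fact n"
    by (simp only: sum_distrib_left sum_distrib_right)
  also have "(\<Sum>j<m. j choose r) = m choose Suc r"
  proof (cases m)
    case (Suc m')
    then have "{..<m} = {..m'}" by auto
    then show ?thesis using Suc sum_choose_upper[of r m'] by simp
  qed simp
  finally show ?thesis .
qed

lemma kcoeff_recurrence: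
  assumes "Suc n = p + q + m + h"
  shows "kcoeff (Suc n) p q m r =
    (if 0 < p then kcoeff n (p - 1) q m r else 0) + (if 0 < q then kcoeff n p (q - 1) m r else 0)
    + h * kcoeff n p q m r + m * kcoeff n p q (m - 1) r
    + (if 0 < r then (\<Sum>j<m. kcoeff n p q j (r - 1)) else 0)"
proof (rule kcoeff_eqI)
  define D where "D = fact r * fact p * (fact q :: nat)"
  define C where "C = (m choose r) * fact n"
  have p_term: "(if 0 < p then kcoeff n (p - 1) q m r else 0) * D = p * C"
  proof (cases p)
    case (Suc p')
    have "kcoeff n p' q m r * (fact r * fact p' * fact q) = (m choose r) * fact n"
      using assms Suc by (intro kcoeff_mult_facts) simp
    then show ?thesis unfolding D_def C_def using Suc by (simp add: fact_Suc algebra_simps)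
  qed simp
  have q_term: "(if 0 < q then kcoeff n p (q - 1) m r else 0) * D = q * C"
  proof (cases q)
    case (Suc q')
    have "kcoeff n p q' m r * (fact r * fact p * fact q') = (m choose r) * fact n"
      using assms Suc by (intro kcoeff_mult_facts) simp
    then show ?thesis unfolding D_def C_def using Suc by (simp add: fact_Suc algebra_simps)
  qed simp
  have h_term: "h * kcoeff n p q m r * D = h * C"
  proof (cases h)
    case (Suc h')
    have "kcoeff n p q m r * D = C"
      unfolding D_def C_def using assms Suc by (intro kcoeff_mult_facts) simp
    then show ?thesis by (simp add: mult.assoc)
  qed simp
  have m_term: "m * kcoeff n p q (m - 1) r * D = (m - r) * C"
  proof (cases m)
    case (Suc m')
    have "kcoeff n p q m' r * D = (m' choose r) * fact n"
      unfolding D_def using assms Suc by (intro kcoeff_mult_facts) simp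
    then have "m * kcoeff n p q (m - 1) r * D = m * ((m - 1) choose r) * fact n"
      using Suc by (simp only: mult.assoc diff_Suc_1)
    also have "m * ((m - 1) choose r) = (m - r) * (m choose r)"
      by (rule binomial_absorb_comp[symmetric])
    finally show ?thesis
      unfolding C_def by (simp only: mult.assoc)
  qed (simp add: C_def)
  have r_term: "(if 0 < r then (\<Sum>j<m. kcoeff n p q j (r - 1)) else 0) * D = r * C"
  proof (cases r)
    case (Suc r')
    have "(\<Sum>j<m. kcoeff n p q j r') * (fact (Suc r') * fact p * fact q) = Suc r' * (m choose Suc r') * fact n"
      using assms by (intro sum_kcoeff_choose) simp
    then show ?thesis unfolding D_def C_def Suc by (simp del: fact_Suc mult_Suc add: mult.assoc)
  qed simp
  have "p * C + q * C + h * C + (m - r) * C + r * C = (m choose r) * fact (Suc n)"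
  proof (cases "r \<le> m")
    case True
    then have "p + q + h + (m - r) + r = Suc n" using assms by simp
    then have "p * C + q * C + h * C + (m - r) * C + r * C = Suc n * C"
      by (metis distrib_right)
    then show ?thesis unfolding C_def by (simp add: algebra_simps)
  qed (simp add: C_def binomial_eq_0)
  then show "((if 0 < p then kcoeff n (p - 1) q m r else 0) + (if 0 < q then kcoeff n p (q - 1) m r else 0)
    + h * kcoeff n p q m r + m * kcoeff n p q (m - 1) r
    + (if 0 < r then (\<Sum>j<m. kcoeff n p q j (r - 1)) else 0)) * (fact r * fact p * fact q)
    = (m choose r) * fact (Suc n)"
    unfolding D_def[symmetric] distrib_right p_term q_term h_term m_term r_term .
next
  show "m + p + q \<le> Suc n" using assms by simp
qed

lemma sum_pochhammer_telescoping:
  fixes y :: "'a::comm_ring_1"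
  assumes "\<And>i. i < q \<Longrightarrow> c i = Suc i * c (Suc i)"
  shows "(\<Sum>i<Suc q. y * of_nat (c i) * pochhammer y i) = of_nat (c q) * pochhammer y (Suc q)"
  using assms
proof (induction q)
  case (Suc q)
  have "(\<Sum>i<Suc (Suc q). y * of_nat (c i) * pochhammer y i)
      = of_nat (c q) * pochhammer y (Suc q) + y * of_nat (c (Suc q)) * pochhammer y (Suc q)"
    using Suc by simp
  also have "\<dots> = of_nat (c (Suc q)) * pochhammer y (Suc (Suc q))"
    unfolding Suc.prems[of q, simplified] pochhammer_Suc[of y "Suc q"] by (simp add: algebra_simps)
  finally show ?case .
qed simp

lemma sum_if_max:
  fixes x :: "'a::comm_ring_1" and P :: "'b::linorder set"
  assumes "finite P" "P \<noteq> {}"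
  shows "(\<Sum>a\<in>P. if \<forall>b\<in>P - {a}. b < a then x else 1) = x + of_nat (card P - 1)"
proof -
  define M where "M = Max P"
  have M: "M \<in> P" "\<forall>b\<in>P - {M}. b < M"
    unfolding M_def using assms by (auto simp: order.not_eq_order_implies_strict)
  have "\<not> (\<forall>b\<in>P - {a}. b < a)" if "a \<in> P - {M}" for a
  proof -
    have "M \<in> P - {a}" "a < M" using that M by auto
    then show ?thesis using less_asym by blast
  qed
  then have "(\<Sum>a\<in>P - {M}. if \<forall>b\<in>P - {a}. b < a then x else 1) = (\<Sum>a\<in>P - {M}. 1)"
    by (intro sum.cong) auto
  moreover have "(\<Sum>a\<in>P. if \<forall>b\<in>P - {a}. b < a then x else 1)
      = x + (\<Sum>a\<in>P - {M}. if \<forall>b\<in>P - {a}. b < a then x else 1)"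
    using assms(1) M by (simp add: sum.remove)
  ultimately show ?thesis
    using assms(1) M(1) by simp
qed

lemma sum_rank_less:
  fixes A :: "'b::linorder set"
  assumes "finite A"
  shows "(\<Sum>a\<in>A. f (card {s\<in>A. s < a})) = (\<Sum>i<card A. f i)"
  using assms
proof (induction "card A" arbitrary: A)
  case (Suc k)
  define M where "M = Max A"
  have "A \<noteq> {}" using Suc.hyps(2) by auto
  then have M: "M \<in> A" "\<forall>b\<in>A - {M}. b < M"
    unfolding M_def using Suc.prems by (auto simp: order.not_eq_order_implies_strict)
  then have "card (A - {M}) = k" "{s\<in>A. s < M} = A - {M}"
    using Suc by auto
  moreover have "{s\<in>A. s < a} = {s\<in>A - {M}. s < a}" if "a \<in> A - {M}" for a
  proof -
    have "a < M" using that M by blast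
    then show ?thesis by auto
  qed
  ultimately have "(\<Sum>a\<in>A - {M}. f (card {s\<in>A. s < a})) = (\<Sum>i<k. f i)"
    using Suc.hyps(1)[of "A - {M}"] Suc.prems by simp
  then show ?case
    using Suc.prems Suc.hyps(2)[symmetric] M(1) \<open>card (A - {M}) = k\<close> \<open>{s\<in>A. s < M} = A - {M}\<close>
    by (simp add: sum.remove add.commute)
qed simp

lemma card_greater_eq_card_less:
  fixes A :: "'b::linorder set"
  assumes "finite A" "a \<in> A"
  shows "card {s\<in>A. a < s} = card A - Suc (card {s\<in>A. s < a})"
proof -
  let ?less = "{s\<in>A. s < a}" and ?greater = "{s\<in>A. a < s}"
  have A: "insert a (?less \<union> ?greater) = A"
    using assms(2) by auto
  have fin: "finite ?less" "finite ?greater"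
    using assms(1) by auto
  have "card (insert a (?less \<union> ?greater)) = Suc (card (?less \<union> ?greater))"
    using fin by (intro card_insert_disjoint) auto
  then have "card A = Suc (card (?less \<union> ?greater))"
    unfolding A .
  also have "card (?less \<union> ?greater) = card ?less + card ?greater"
    using fin by (intro card_Un_disjoint) auto
  finally show ?thesis by simp
qed

lemma sum_rank_greater:
  fixes A :: "'b::linorder set"
  assumes "finite A"
  shows "(\<Sum>a\<in>A. f (card {s\<in>A. a < s})) = (\<Sum>i<card A. f i)"
proof -
  have "(\<Sum>a\<in>A. f (card {s\<in>A. a < s})) = (\<Sum>a\<in>A. f (card A - Suc (card {s\<in>A. s < a})))"
    using assms by (simp add: card_greater_eq_card_less)
  also have "\<dots> = (\<Sum>i<card A. f (card A - Suc i))"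
    using sum_rank_less[OF assms, of "\<lambda>i. f (card A - Suc i)"] .
  also have "\<dots> = (\<Sum>i<card A. f i)"
    by (rule sum.nat_diff_reindex)
  finally show ?thesis .
qed

definition weight_sum_formula :: "'a::comm_ring_1 \<Rightarrow> 'a \<Rightarrow> nat set \<Rightarrow> nat \<Rightarrow> nat \<Rightarrow> nat \<Rightarrow> nat \<Rightarrow> nat \<Rightarrow> 'a" where
  "weight_sum_formula x y S r E H L t =
     of_nat (kcoeff (card S - 1) (card {s\<in>S. H < s}) (card {s\<in>S. t \<le> s \<and> s < L})
       (card {s\<in>S. L < s \<and> s \<le> E}) r)
     * pochhammer x (card {s\<in>S. H < s}) * pochhammer y (card {s\<in>S. t \<le> s \<and> s < L})"

lemma distinct_set_eq_singleton:
  assumes "distinct xs" "set xs = {a}"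
  shows "xs = [a]"
proof -
  have "length xs = Suc 0"
    using distinct_card[OF assms(1)] assms(2) by simp
  then obtain z where "xs = [z]"
    by (auto simp: length_Suc_conv)
  with assms(2) show ?thesis by simp
qed

lemma assemblees_on_singleton: "assemblees_on {L} (Suc r) = (if r = 0 then {[[L]]} else {})"
proof -
  have "bs = [[L]]" if A: "bs \<in> assemblees_on {L} (Suc r)" for bs
  proof -
    obtain b rest where bs: "bs = b # rest"
      using A unfolding assemblees_on_def by (cases bs) auto
    have "distinct (concat bs)" "set (concat bs) = {L}"
      using that unfolding assemblees_on_def by auto
    then have "concat bs = [L]"
      by (rule distinct_set_eq_singleton)
    moreover have "b \<noteq> []" "\<forall>c\<in>set rest. c \<noteq> []"
      using that unfolding assemblees_on_def bs by auto
    ultimately show ?thesis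
      unfolding bs by (cases b) (auto simp: append_eq_Cons_conv)
  qed
  then show ?thesis
    unfolding assemblees_on_def by (auto simp: length_Suc_conv)
qed

lemma weight_sum_singleton:
  assumes "L \<le> E" "E \<le> H"
  shows "weight_sum x y {L} r E H L t = weight_sum_formula x y {L} r E H L t"
proof -
  have "assemblees_with_ends {L} r E L = (if r = 0 then {[[L]]} else {})"
    unfolding assemblees_with_ends_def assemblees_on_singleton using assms by auto
  moreover have "record_weight x y H L t [L] = 1"
    unfolding record_weight_def records_above_Cons records_below_Cons using assms
    by (simp add: records_above_def records_below_def)
  moreover have empty: "{s\<in>{L}. H < s} = {}" "{s\<in>{L}. t \<le> s \<and> s < L} = {}" "{s\<in>{L}. L < s \<and> s \<le> E} = {}"
    using assms by auto
  ultimately show ?thesis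
    unfolding weight_sum_def weight_sum_formula_def empty by (cases r) (simp_all add: kcoeff_def)
qed

text \<open>How deleting the first letter \<open>a\<close> of the word changes the parameters \<open>p, q, m\<close> of the
  formula depends only on which of the five classes below contains \<open>a\<close>.\<close>

locale weight_sum_step =
  fixes x y :: "'a::comm_ring_1" and S :: "nat set" and n r E H L t :: nat
  assumes formula_smaller: "\<And>S' r' E' H' L' t'. finite S' \<Longrightarrow> card S' = Suc n \<Longrightarrow> L' \<in> S' \<Longrightarrow>
      t' \<le> L' \<Longrightarrow> L' \<le> E' \<Longrightarrow> E' \<le> H' \<Longrightarrow>
      weight_sum x y S' r' E' H' L' t' = weight_sum_formula x y S' r' E' H' L' t'"
    and finite_S: "finite S" and card_S: "card S = Suc (Suc n)" and L_in_S: "L \<in> S"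
    and t_le_L: "t \<le> L" and L_le_E: "L \<le> E" and E_le_H: "E \<le> H"
begin

definition high where "high = {s\<in>S. H < s}"
definition gap where "gap = {s\<in>S. E < s \<and> s \<le> H}"
definition mid where "mid = {s\<in>S. L < s \<and> s \<le> E}"
definition window where "window = {s\<in>S. t \<le> s \<and> s < L}"
definition low where "low = {s\<in>S. s < t}"

abbreviation "p \<equiv> card high"
abbreviation "q \<equiv> card window"
abbreviation "m \<equiv> card mid"
abbreviation "X \<equiv> pochhammer x p * pochhammer y q"

definition summand :: "nat \<Rightarrow> 'a" where
  "summand a = (if H < a \<and> (\<forall>b\<in>S - {a}. H < b \<longrightarrow> b < a) then x else 1) * (if a < L \<and> t \<le> a then y else 1)
     * weight_sum x y (S - {a}) r E H L (if a < L then max t (Suc a) else t)"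

lemma finite_classes: "finite high" "finite gap" "finite mid" "finite window" "finite low"
  unfolding high_def gap_def mid_def window_def low_def using finite_S by simp_all

lemma partition_classes:
  "S - {L} = high \<union> gap \<union> mid \<union> window \<union> low"
  "high \<inter> gap = {}" "high \<inter> mid = {}" "high \<inter> window = {}" "high \<inter> low = {}"
  "gap \<inter> mid = {}" "gap \<inter> window = {}" "gap \<inter> low = {}"
  "mid \<inter> window = {}" "mid \<inter> low = {}" "window \<inter> low = {}"
  unfolding high_def gap_def mid_def window_def low_def using t_le_L L_le_E E_le_H by auto

lemma sum_over_classes:
  "sum f (S - {L}) = sum f high + sum f gap + sum f mid + sum f window + sum f low"
  using finite_classes partition_classes by (simp add: sum.union_disjoint Int_Un_distrib2)

lemma card_classes: "Suc n = p + q + m + (card gap + card low)"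
proof -
  have "card (S - {L}) = card high + card gap + card mid + card window + card low"
    unfolding card_eq_sum by (rule sum_over_classes)
  then show ?thesis
    using card_S L_in_S finite_S by simp
qed

lemma formula_delete:
  assumes "a \<in> S" "L' \<in> S - {a}" "t' \<le> L'" "L' \<le> E'" "E' \<le> H'"
  shows "weight_sum x y (S - {a}) r' E' H' L' t' =
    of_nat (kcoeff n (card {s\<in>S - {a}. H' < s}) (card {s\<in>S - {a}. t' \<le> s \<and> s < L'})
       (card {s\<in>S - {a}. L' < s \<and> s \<le> E'}) r')
     * pochhammer x (card {s\<in>S - {a}. H' < s}) * pochhammer y (card {s\<in>S - {a}. t' \<le> s \<and> s < L'})"
  using formula_smaller[of "S - {a}"] assms finite_S card_S
  unfolding weight_sum_formula_def by simp

lemma sum_high: "sum summand high = of_nat (if 0 < p then kcoeff n (p - 1) q m r else 0) * X"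
proof (cases "high = {}")
  case False
  have "summand a = (if \<forall>b\<in>high - {a}. b < a then x else 1) *
      (of_nat (kcoeff n (p - 1) q m r) * pochhammer x (p - 1) * pochhammer y q)" if "a \<in> high" for a
  proof -
    have "a \<in> S" "H < a" using that unfolding high_def by auto
    moreover have "{s\<in>S - {a}. H < s} = high - {a}" "{s\<in>S - {a}. t \<le> s \<and> s < L} = window"
      "{s\<in>S - {a}. L < s \<and> s \<le> E} = mid" "(\<forall>b\<in>S - {a}. H < b \<longrightarrow> b < a) \<longleftrightarrow> (\<forall>b\<in>high - {a}. b < a)"
      using \<open>H < a\<close> L_le_E E_le_H unfolding high_def window_def mid_def by auto
    ultimately show ?thesis
      unfolding summand_def using formula_delete[of a L t E H r] L_in_S t_le_L L_le_E E_le_H that finite_classes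
      by simp
  qed
  then have "sum summand high = (\<Sum>a\<in>high. if \<forall>b\<in>high - {a}. b < a then x else 1) *
      (of_nat (kcoeff n (p - 1) q m r) * pochhammer x (p - 1) * pochhammer y q)"
    by (simp add: sum_distrib_right)
  also have "\<dots> = (x + of_nat (p - 1)) * (of_nat (kcoeff n (p - 1) q m r) * pochhammer x (p - 1) * pochhammer y q)"
    using sum_if_max[OF finite_classes(1) False, of x] by simp
  finally show ?thesis
    using False finite_classes(1) by (cases p) (simp_all add: pochhammer_Suc algebra_simps)
qed simp

lemma summand_neutral:
  assumes "a \<in> gap \<union> low"
  shows "summand a = of_nat (kcoeff n p q m r) * X"
proof -
  have "a \<in> S" "a \<noteq> L"
    and no_records: "(if H < a \<and> (\<forall>b\<in>S - {a}. H < b \<longrightarrow> b < a) then x else 1) = 1"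
      "(if a < L \<and> t \<le> a then y else 1) = 1" "(if a < L then max t (Suc a) else t) = t"
    using assms t_le_L L_le_E E_le_H unfolding gap_def low_def by auto
  moreover have "{s\<in>S - {a}. H < s} = high" "{s\<in>S - {a}. t \<le> s \<and> s < L} = window"
    "{s\<in>S - {a}. L < s \<and> s \<le> E} = mid"
    using assms t_le_L L_le_E E_le_H unfolding gap_def low_def high_def window_def mid_def by auto
  ultimately show ?thesis
    unfolding summand_def no_records using formula_delete[of a L t E H r] L_in_S t_le_L L_le_E E_le_H
    by simp
qed

lemma sum_gap: "sum summand gap = of_nat (card gap * kcoeff n p q m r) * X"
  using summand_neutral by simp

lemma sum_low: "sum summand low = of_nat (card low * kcoeff n p q m r) * X"
  using summand_neutral by simp

lemma sum_mid: "sum summand mid = of_nat (m * kcoeff n p q (m - 1) r) * X"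
proof -
  have "summand a = of_nat (kcoeff n p q (m - 1) r) * X" if "a \<in> mid" for a
  proof -
    have "a \<in> S" "a \<noteq> L" "\<not> H < a" "\<not> a < L"
      using that E_le_H unfolding mid_def by auto
    moreover have "{s\<in>S - {a}. H < s} = high" "{s\<in>S - {a}. t \<le> s \<and> s < L} = window"
      "{s\<in>S - {a}. L < s \<and> s \<le> E} = mid - {a}"
      using that E_le_H unfolding high_def window_def mid_def by auto
    ultimately show ?thesis
      unfolding summand_def using formula_delete[of a L t E H r] L_in_S t_le_L L_le_E E_le_H that finite_classes
      by simp
  qed
  then show ?thesis by simp
qed

lemma sum_window: "sum summand window = of_nat (if 0 < q then kcoeff n p (q - 1) m r else 0) * X"
proof -
  have "summand a = y * (of_nat (kcoeff n p (card {s\<in>window. a < s}) m r) * pochhammer x p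
      * pochhammer y (card {s\<in>window. a < s}))" if "a \<in> window" for a
  proof -
    have "a \<in> S" "a \<noteq> L" "\<not> H < a" "a < L" "t \<le> a" "max t (Suc a) = Suc a" "Suc a \<le> L"
      using that L_le_E E_le_H unfolding window_def by auto
    moreover have "{s\<in>S - {a}. H < s} = high" "{s\<in>S - {a}. Suc a \<le> s \<and> s < L} = {s\<in>window. a < s}"
      "{s\<in>S - {a}. L < s \<and> s \<le> E} = mid"
      using that L_le_E E_le_H unfolding high_def window_def mid_def by auto
    ultimately show ?thesis
      unfolding summand_def using formula_delete[of a L "Suc a" E H r] L_in_S L_le_E E_le_H by simp
  qed
  then have "sum summand window = (\<Sum>a\<in>window. y * (of_nat (kcoeff n p (card {s\<in>window. a < s}) m r)
      * pochhammer x p * pochhammer y (card {s\<in>window. a < s})))"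
    by simp
  also have "\<dots> = (\<Sum>i<q. y * (of_nat (kcoeff n p i m r) * pochhammer x p * pochhammer y i))"
    by (rule sum_rank_greater[OF finite_classes(4)])
  also have "\<dots> = pochhammer x p * (\<Sum>i<q. y * of_nat (kcoeff n p i m r) * pochhammer y i)"
    by (simp add: sum_distrib_left algebra_simps)
  also have "\<dots> = of_nat (if 0 < q then kcoeff n p (q - 1) m r else 0) * X"
  proof (cases q)
    case (Suc q')
    have "kcoeff n p i m r = Suc i * kcoeff n p (Suc i) m r" if "i < q'" for i
      using that card_classes Suc by (intro kcoeff_Suc_shift) simp
    then have "(\<Sum>i<Suc q'. y * of_nat (kcoeff n p i m r) * pochhammer y i)
        = of_nat (kcoeff n p q' m r) * pochhammer y (Suc q')"
      by (rule sum_pochhammer_telescoping)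
    then show ?thesis unfolding Suc by simp
  qed simp
  finally show ?thesis .
qed

lemma sum_singleton_blocks:
  "(\<Sum>a\<in>mid. weight_sum x y (S - {a}) (r - 1) (a - 1) H L t) = of_nat (\<Sum>j<m. kcoeff n p q j (r - 1)) * X"
proof -
  have "weight_sum x y (S - {a}) (r - 1) (a - 1) H L t = of_nat (kcoeff n p q (card {s\<in>mid. s < a}) (r - 1)) * X"
    if "a \<in> mid" for a
  proof -
    have "a \<in> S" "L \<in> S - {a}" "L \<le> a - 1" "a - 1 \<le> H"
      using that L_in_S E_le_H unfolding mid_def by auto
    moreover have "{s\<in>S - {a}. H < s} = high" "{s\<in>S - {a}. t \<le> s \<and> s < L} = window"
      "{s\<in>S - {a}. L < s \<and> s \<le> a - 1} = {s\<in>mid. s < a}"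
      using that E_le_H unfolding high_def window_def mid_def by auto
    ultimately show ?thesis
      using formula_delete[of a L t "a - 1" H "r - 1"] t_le_L by simp
  qed
  then have "(\<Sum>a\<in>mid. weight_sum x y (S - {a}) (r - 1) (a - 1) H L t)
      = (\<Sum>a\<in>mid. of_nat (kcoeff n p q (card {s\<in>mid. s < a}) (r - 1)) * X)"
    by simp
  also have "\<dots> = (\<Sum>j<m. of_nat (kcoeff n p q j (r - 1)) * X)"
    by (rule sum_rank_less[OF finite_classes(3)])
  finally show ?thesis
    by (simp add: sum_distrib_right)
qed

theorem formula_step: "weight_sum x y S r E H L t = weight_sum_formula x y S r E H L t"
proof -
  have "weight_sum x y S r E H L t = sum summand (S - {L})
      + (if r = 0 then 0 else (\<Sum>a\<in>mid. weight_sum x y (S - {a}) (r - 1) (a - 1) H L t))"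
    unfolding summand_def mid_def
    by (rule weight_sum_first_letter[OF finite_S _ L_in_S E_le_H]) (simp add: card_S)
  also have "\<dots> = of_nat (kcoeff (Suc n) p q m r) * X"
    unfolding sum_over_classes sum_high sum_gap sum_mid sum_window sum_low sum_singleton_blocks
      kcoeff_recurrence[OF card_classes]
    by (cases "r = 0") (simp_all add: algebra_simps)
  also have "\<dots> = weight_sum_formula x y S r E H L t"
    unfolding weight_sum_formula_def high_def window_def mid_def using card_S by simp
  finally show ?thesis .
qed

end

theorem weight_sum_eq_formula:
  assumes "finite S" "L \<in> S" "t \<le> L" "L \<le> E" "E \<le> H"
  shows "weight_sum x y S r E H L t = weight_sum_formula x y S r E H L t"
  using assms
proof (induction "card S - 1" arbitrary: S r E H L t)
  case 0
  then have "card S = 1"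
    using card_0_eq[of S] by fastforce
  then have "S = {L}"
    using \<open>L \<in> S\<close> by (metis card_1_singletonE singletonD)
  then show ?case
    using weight_sum_singleton 0 by simp
next
  case (Suc n)
  interpret weight_sum_step x y S n r E H L t
    using Suc by unfold_locales (auto intro: Suc.hyps(1))
  show ?case
    by (rule formula_step)
qed

lemma pochhammer_Suc_eq_choose: "pochhammer (Suc a) k = ((a + k) choose k) * fact k"
proof (induction k)
  case (Suc k)
  have "pochhammer (Suc a) (Suc k) = (Suc (a + k) * ((a + k) choose k)) * fact k"
    using Suc by (simp add: pochhammer_Suc algebra_simps)
  also have "Suc (a + k) * ((a + k) choose k) = (Suc (a + k) choose Suc k) * Suc k"
    by (rule Suc_times_binomial_eq)
  finally show ?case
    by (simp add: algebra_simps del: binomial_Suc_Suc)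
qed simp

definition block_coeff :: "nat \<Rightarrow> nat \<Rightarrow> nat \<Rightarrow> nat \<Rightarrow> nat" where
  "block_coeff n r p q = (if p + q \<le> n - r
     then (n choose r) * ((n - r) choose (p + q)) * ((p + q) choose p) * pochhammer r (n - r - (p + q))
     else 0)"

lemma block_coeff_mult_facts:
  assumes "p + q + Suc r \<le> n"
  shows "block_coeff n (Suc r) p q * (fact (Suc r) * fact p * fact q) = ((n - p - q - 1) choose r) * fact n"
proof -
  define s where "s = p + q"
  define N where "N = n - Suc r"
  define k where "k = N - s"
  have "pochhammer (Suc r) k = ((r + k) choose k) * fact k"
    by (rule pochhammer_Suc_eq_choose)
  also have "(r + k) choose k = (n - p - q - 1) choose r"
    using assms binomial_symmetric[of r "r + k"] by (simp add: k_def N_def s_def add_ac)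
  finally have poch: "pochhammer (Suc r) k = ((n - p - q - 1) choose r) * fact k" .
  have block_cond: "p + q \<le> n - Suc r"
    using assms by simp
  have "(s choose p) * fact p * fact q = fact s"
    using binomial_fact_lemma[of p s] by (simp add: s_def algebra_simps)
  moreover have "(N choose s) * fact s * fact k = fact N"
    using binomial_fact_lemma[of s N] assms by (simp add: s_def N_def k_def algebra_simps)
  moreover have "(n choose Suc r) * fact (Suc r) * fact N = fact n"
    using binomial_fact_lemma[of "Suc r" n] assms by (simp add: N_def algebra_simps)
  moreover have "block_coeff n (Suc r) p q * (fact (Suc r) * fact p * fact q)
      = ((n - p - q - 1) choose r) * ((n choose Suc r) * fact (Suc r) * ((N choose s) * ((s choose p) * fact p * fact q) * fact k))"
    using assms unfolding block_coeff_def poch[unfolded k_def N_def s_def] if_P[OF block_cond]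
    by (simp add: s_def N_def k_def algebra_simps)
  ultimately show ?thesis
    by simp
qed

lemma kcoeff_top_difference:
  assumes "p + q \<le> n" "r \<le> n"
  shows "kcoeff n p q (n - p - q) r =
    (if 0 < n - p - q then kcoeff n p q (n - p - q - 1) r else 0) + block_coeff n r p q"
proof (cases r)
  case 0
  show ?thesis
  proof (cases "p + q < n")
    case True
    then have "pochhammer 0 (n - (p + q)) = (0::nat)"
      by (simp add: pochhammer_0_left)
    then show ?thesis
      using True 0 by (simp add: kcoeff_def block_coeff_def)
  next
    case False
    then have "q = n - p" "p \<le> n" using assms(1) by auto
    then have "kcoeff n p q 0 0 = n choose p"
      using binomial_fact_lemma[of p n] by (intro kcoeff_eqI) (simp_all add: algebra_simps)
    then show ?thesis
      using False 0 assms(1) by (simp add: block_coeff_def)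
  qed
next
  case (Suc r')
  show ?thesis
  proof (cases "p + q + r \<le> n")
    case True
    define m where "m = n - p - q"
    have "0 < m"
      using True Suc unfolding m_def by simp
    then obtain m' where "m = Suc m'"
      using gr0_implies_Suc by blast
    then have "m choose r = ((m - 1) choose r) + ((m - 1) choose r')"
      using Suc by simp
    moreover have "kcoeff n p q (m - 1) r * (fact r * fact p * fact q) = ((m - 1) choose r) * fact n"
      using assms unfolding m_def by (intro kcoeff_mult_facts) simp
    moreover have "block_coeff n r p q * (fact r * fact p * fact q) = ((m - 1) choose r') * fact n"
      using block_coeff_mult_facts[of p q r' n] True Suc unfolding m_def by simp
    ultimately have "(kcoeff n p q (m - 1) r + block_coeff n r p q) * (fact r * fact p * fact q)
        = (m choose r) * fact n"
      by (simp only: distrib_right)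
    then have "kcoeff n p q m r = kcoeff n p q (m - 1) r + block_coeff n r p q"
      using assms(1) by (intro kcoeff_eqI) (simp_all add: m_def)
    then show ?thesis
      using True Suc unfolding m_def by simp
  next
    case False
    then show ?thesis
      using Suc by (simp add: kcoeff_def block_coeff_def binomial_eq_0)
  qed
qed

lemma prod_eq_pochhammer:
  fixes c :: "'a::comm_ring_1"
  assumes "r \<le> n"
  shows "(\<Prod>i\<in>{r..<n}. c + of_nat i) = pochhammer (of_nat r + c) (n - r)"
proof -
  have "{r..<n} = {0 + r..<(n - r) + r}"
    using assms by simp
  then have "(\<Prod>i\<in>{r..<n}. c + of_nat i) = (\<Prod>i\<in>{0..<n - r}. c + of_nat (i + r))"
    by (simp only: prod.shift_bounds_nat_ivl)
  also have "\<dots> = pochhammer (of_nat r + c) (n - r)"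
    unfolding pochhammer_prod by (rule prod.cong) (auto simp: algebra_simps)
  finally show ?thesis .
qed

lemma pochhammer_of_nat_add:
  fixes c :: "'a::comm_ring_1"
  shows "pochhammer (of_nat r + c) N = (\<Sum>s\<le>N. of_nat (N choose s) * of_nat (pochhammer r (N - s)) * pochhammer c s)"
proof -
  have "pochhammer (of_nat r + c) N = (\<Sum>k\<le>N. of_nat (N choose k) * pochhammer (of_nat r) k * pochhammer c (N - k))"
    by (rule pochhammer_binomial_sum)
  also have "\<dots> = (\<Sum>k\<le>N. of_nat (N choose (N - k)) * pochhammer (of_nat r) (N - k) * pochhammer c (N - (N - k)))"
    unfolding atMost_atLeast0 by (rule sum.atLeastAtMost_rev[of _ 0 N, simplified])
  also have "\<dots> = (\<Sum>s\<le>N. of_nat (N choose s) * of_nat (pochhammer r (N - s)) * pochhammer c s)"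
    by (rule sum.cong) (auto simp: pochhammer_of_nat binomial_symmetric[symmetric])
  finally show ?thesis .
qed

lemma sum_block_coeff:
  fixes x y :: "'a::comm_ring_1"
  assumes "r \<le> n"
  shows "(\<Sum>(p, q)\<in>{(p, q). p + q \<le> n}. of_nat (block_coeff n r p q) * pochhammer x p * pochhammer y q)
     = of_nat (n choose r) * pochhammer (of_nat r + (x + y)) (n - r)"
proof -
  define N where "N = n - r"
  have "(\<Sum>(p, q)\<in>{(p, q). p + q \<le> n}. of_nat (block_coeff n r p q) * pochhammer x p * pochhammer y q)
      = (\<Sum>s\<le>n. \<Sum>p\<le>s. of_nat (block_coeff n r p (s - p)) * pochhammer x p * pochhammer y (s - p))"
    by (rule sum.triangle_reindex_eq)
  also have "\<dots> = (\<Sum>s\<le>N. \<Sum>p\<le>s. of_nat (block_coeff n r p (s - p)) * pochhammer x p * pochhammer y (s - p))"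
    by (rule sum.mono_neutral_right) (auto simp: N_def block_coeff_def)
  also have "\<dots> = (\<Sum>s\<le>N. of_nat (n choose r) * (of_nat (N choose s) * of_nat (pochhammer r (N - s)) * pochhammer (x + y) s))"
  proof (rule sum.cong[OF refl])
    fix s assume "s \<in> {..N}"
    then have "(\<Sum>p\<le>s. of_nat (block_coeff n r p (s - p)) * pochhammer x p * pochhammer y (s - p))
        = (\<Sum>p\<le>s. (of_nat (n choose r) * of_nat (N choose s) * of_nat (pochhammer r (N - s)))
            * (of_nat (s choose p) * pochhammer x p * pochhammer y (s - p)))"
      by (intro sum.cong refl) (auto simp: block_coeff_def N_def algebra_simps)
    also have "\<dots> = (of_nat (n choose r) * of_nat (N choose s) * of_nat (pochhammer r (N - s))) * pochhammer (x + y) s"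
      unfolding pochhammer_binomial_sum[of x y s] by (simp add: sum_distrib_left)
    finally show "(\<Sum>p\<le>s. of_nat (block_coeff n r p (s - p)) * pochhammer x p * pochhammer y (s - p))
        = of_nat (n choose r) * (of_nat (N choose s) * of_nat (pochhammer r (N - s)) * pochhammer (x + y) s)"
      by (simp add: algebra_simps)
  qed
  also have "\<dots> = of_nat (n choose r) * pochhammer (of_nat r + (x + y)) N"
    unfolding pochhammer_of_nat_add[of r "x + y" N] by (simp add: sum_distrib_left)
  finally show ?thesis
    unfolding N_def .
qed

lemma weight_sum_interval:
  assumes "1 \<le> L" "L \<le> E" "E \<le> H" "H \<le> Suc n"
  shows "weight_sum x y {1..Suc n} r E H L 0 =
    of_nat (kcoeff n (Suc n - H) (L - 1) (E - L) r) * pochhammer x (Suc n - H) * pochhammer y (L - 1)"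
proof -
  have "{s\<in>{1..Suc n}. H < s} = {Suc H..Suc n}" "{s\<in>{1..Suc n}. 0 \<le> s \<and> s < L} = {1..L - 1}"
    "{s\<in>{1..Suc n}. L < s \<and> s \<le> E} = {Suc L..E}"
    using assms by auto
  then show ?thesis
    using weight_sum_eq_formula[of "{1..Suc n}" L 0 E H x y r] assms
    unfolding weight_sum_formula_def by simp
qed

lemma weight_sum_given_ends:
  fixes x y :: "'a::comm_ring_1"
  assumes "p + q \<le> n" "r \<le> n"
  shows "(\<Sum>A\<in>{A \<in> assemblees_on {1..Suc n} (Suc r). (Suc n - last (hd A), last (last A) - 1) = (p, q)}.
           record_weight x y (last (hd A)) (last (last A)) 0 (concat A))
       = of_nat (block_coeff n r p q) * pochhammer x p * pochhammer y q"
proof -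
  define h where "h = Suc n - p"
  define L where "L = Suc q"
  let ?F = "\<lambda>E. assemblees_with_ends {1..Suc n} r E L"
  have L_h: "1 \<le> L" "L \<le> h" "h \<le> Suc n"
    using assms(1) unfolding h_def L_def by auto
  have ends: "{A \<in> assemblees_on {1..Suc n} (Suc r). (Suc n - last (hd A), last (last A) - 1) = (p, q)}
      = ?F h - ?F (h - 1)"
    using assms(1) assemblees_on_block_ends[of _ "{1..Suc n}" r]
    unfolding assemblees_with_ends_def h_def L_def by fastforce
  have "(\<Sum>A\<in>?F h - ?F (h - 1). record_weight x y (last (hd A)) (last (last A)) 0 (concat A))
      = (\<Sum>A\<in>?F h - ?F (h - 1). record_weight x y h L 0 (concat A))"
  proof (intro sum.cong refl)
    fix A assume "A \<in> ?F h - ?F (h - 1)"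
    then have "last (hd A) = h" "last (last A) = L"
      unfolding assemblees_with_ends_def by auto
    then show "record_weight x y (last (hd A)) (last (last A)) 0 (concat A) = record_weight x y h L 0 (concat A)"
      by simp
  qed
  also have "\<dots> = weight_sum x y {1..Suc n} r h h L 0 - weight_sum x y {1..Suc n} r (h - 1) h L 0"
    unfolding weight_sum_def
    by (rule sum_diff[OF finite_assemblees_with_ends]) (auto simp: assemblees_with_ends_def)
  also have "weight_sum x y {1..Suc n} r h h L 0 = of_nat (kcoeff n p q (n - p - q) r) * pochhammer x p * pochhammer y q"
    using weight_sum_interval[OF L_h(1,2) order_refl L_h(3)] assms(1) unfolding h_def L_def by simp
  also have "weight_sum x y {1..Suc n} r (h - 1) h L 0
      = (if 0 < n - p - q then of_nat (kcoeff n p q (n - p - q - 1) r) * pochhammer x p * pochhammer y q else 0)"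
  proof (cases "0 < n - p - q")
    case True
    then have "L \<le> h - 1"
      unfolding h_def L_def by simp
    then show ?thesis
      using True weight_sum_interval[OF L_h(1) \<open>L \<le> h - 1\<close> diff_le_self L_h(3)] assms(1) unfolding h_def L_def by simp
  next
    case False
    then have "?F (h - 1) = {}"
      using assms(1) assemblees_on_block_ends(3)[of _ "{1..Suc n}" r]
      unfolding assemblees_with_ends_def h_def L_def by fastforce
    then show ?thesis
      using False unfolding weight_sum_def by simp
  qed
  finally show ?thesis
    unfolding ends kcoeff_top_difference[OF assms] by (cases "0 < n - p - q") (simp_all add: algebra_simps)
qed

lemma assemblees_record_weight_sum:
  fixes x y :: "'a::comm_ring_1"
  assumes "r \<le> n"
  shows "(\<Sum>A\<in>assemblees_on {1..Suc n} (Suc r). record_weight x y (last (hd A)) (last (last A)) 0 (concat A))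
     = of_nat (n choose r) * pochhammer (of_nat r + (x + y)) (n - r)"
proof -
  let ?ends = "\<lambda>A. (Suc n - last (hd A), last (last A) - 1)"
  have "?ends ` assemblees_on {1..Suc n} (Suc r) \<subseteq> {(p, q). p + q \<le> n}"
    using assemblees_on_block_ends by fastforce
  moreover have "finite {(p, q). p + q \<le> n}"
    by (rule finite_subset[of _ "{..n} \<times> {..n}"]) auto
  ultimately have "(\<Sum>A\<in>assemblees_on {1..Suc n} (Suc r). record_weight x y (last (hd A)) (last (last A)) 0 (concat A))
      = (\<Sum>pq\<in>{(p, q). p + q \<le> n}. \<Sum>A\<in>{A \<in> assemblees_on {1..Suc n} (Suc r). ?ends A = pq}.
           record_weight x y (last (hd A)) (last (last A)) 0 (concat A))"
    by (intro sum.group[symmetric] finite_assemblees_on) auto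
  also have "\<dots> = (\<Sum>(p, q)\<in>{(p, q). p + q \<le> n}. of_nat (block_coeff n r p q) * pochhammer x p * pochhammer y q)"
    using weight_sum_given_ends assms by (intro sum.cong refl) auto
  also have "\<dots> = of_nat (n choose r) * pochhammer (of_nat r + (x + y)) (n - r)"
    using assms by (rule sum_block_coeff)
  finally show ?thesis .
qed

theorem mainTheorem1:
  fixes \<alpha> \<beta> :: "'a::field" and n r :: nat
  assumes "r \<le> n" and "\<alpha> \<noteq> 0" and "\<beta> \<noteq> 0"
  shows "(\<Sum>A\<in>assemblees (n+1) (r+1). inverse \<alpha> ^ card (lrs A) * inverse \<beta> ^ card (rls A))
       = of_nat (n choose r) * (\<Prod>i\<in>{r..<n}. inverse \<alpha> + inverse \<beta> + of_nat i)"
proof -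
  have "(\<Sum>A\<in>assemblees (n+1) (r+1). inverse \<alpha> ^ card (lrs A) * inverse \<beta> ^ card (rls A))
      = (\<Sum>A\<in>assemblees_on {1..Suc n} (Suc r).
           record_weight (inverse \<alpha>) (inverse \<beta>) (last (hd A)) (last (last A)) 0 (concat A))"
    unfolding assemblees_eq_assemblees_on record_weight_def lrs_eq_records_above rls_eq_records_below
    by simp
  also have "\<dots> = of_nat (n choose r) * pochhammer (of_nat r + (inverse \<alpha> + inverse \<beta>)) (n - r)"
    using assms(1) by (rule assemblees_record_weight_sum)
  also have "\<dots> = of_nat (n choose r) * (\<Prod>i\<in>{r..<n}. inverse \<alpha> + inverse \<beta> + of_nat i)"
    using prod_eq_pochhammer[OF assms(1), of "inverse \<alpha> + inverse \<beta>"] by simp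
  finally show ?thesis .
qed

end
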